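(* Let $H_n=\{x\in\mathbb{R}^n: x_1=0\}$ and let $H_n^-=\{x_1\le 0\}$, $H_n^+=\{x_1\ge 0\}$. There exist absolute constants $C,c>0$ such that for every $\eta\in(0,1)$ there is a sequence of centrally symmetric star-shaped bodies $S_n\subseteq\mathbb{R}^n$ (with $S_n=-S_n$) and an integer $N_\eta$ such that for all $n\ge N_\eta$, $\eta(S_n)\ge c\,\eta$ and \[ \mathrm{vol}_{n-1}(H_n\cap S_n)\le C\left(\frac{\eta\ln(1/\eta)}{(1-\eta)\,\mathrm{Diam}(S_n)}\right)\min\{\mathrm{vol}_n(H_n^-\cap S_n),\ \mathrm{vol}_n(H_n^+\cap S_n)\}. \]
   Context: A compact body is a compact set with nonempty interior equal to the closure of its interior. $K_S=\{x\in S: [x,y]\subseteq S\ \forall y\in S\}$ is the kernel of $S$; $S$ is star-shaped if $K_S\ne\emptyset$; a star-shaped body is a compact body that is star-shaped; $\eta(S)=\mathrm{vol}(K_S)/\mathrm{vol}(S)$. $\mathrm{Diam}$ denotes the diameter and $\mathrm{vol}_k$ the $k$-dimensional volume. *)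

theory Defs
  imports "HOL-Analysis.Analysis"
begin

text \<open>R^n is modelled as the extensional function space PiE {..<n} UNIV
  (coordinates 0..n-1; the paper's x_1 is coordinate 0), with the Euclidean
  metric, its metric topology, and Lebesgue measure as the product measure
  of n copies of lborel.\<close>

definition Rn :: "nat \<Rightarrow> (nat \<Rightarrow> real) set" where
  "Rn n = PiE {..<n} (\<lambda>_. UNIV)"

definition edist :: "nat \<Rightarrow> (nat \<Rightarrow> real) \<Rightarrow> (nat \<Rightarrow> real) \<Rightarrow> real" where
  "edist n x y = sqrt (\<Sum>i<n. (x i - y i)^2)"

definition etop :: "nat \<Rightarrow> (nat \<Rightarrow> real) topology" where
  "etop n = Metric_space.mtopology (Rn n) (edist n)"

definition vol :: "nat \<Rightarrow> (nat \<Rightarrow> real) set \<Rightarrow> real" where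
  "vol n A = measure (Pi\<^sub>M {..<n} (\<lambda>_. lborel)) A"

definition vol_hyp :: "nat \<Rightarrow> (nat \<Rightarrow> real) set \<Rightarrow> real" where
  "vol_hyp n A = measure (Pi\<^sub>M {1..<n} (\<lambda>_. lborel))
      ((\<lambda>x. restrict x {1..<n}) ` {x \<in> A. x 0 = 0})"

definition Diam :: "nat \<Rightarrow> (nat \<Rightarrow> real) set \<Rightarrow> real" where
  "Diam n S = Sup {edist n x y | x y. x \<in> S \<and> y \<in> S}"

definition segment :: "nat \<Rightarrow> (nat \<Rightarrow> real) \<Rightarrow> (nat \<Rightarrow> real) \<Rightarrow> (nat \<Rightarrow> real) set" where
  "segment n x y = {restrict (\<lambda>i. (1 - t) * x i + t * y i) {..<n} | t. 0 \<le> t \<and> t \<le> 1}"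

definition kernel :: "nat \<Rightarrow> (nat \<Rightarrow> real) set \<Rightarrow> (nat \<Rightarrow> real) set" where
  "kernel n S = {x \<in> S. \<forall>y \<in> S. segment n x y \<subseteq> S}"

definition compact_body :: "nat \<Rightarrow> (nat \<Rightarrow> real) set \<Rightarrow> bool" where
  "compact_body n S \<longleftrightarrow> S \<subseteq> Rn n \<and> compactin (etop n) S \<and>
     etop n interior_of S \<noteq> {} \<and> S = etop n closure_of (etop n interior_of S)"

definition star_body :: "nat \<Rightarrow> (nat \<Rightarrow> real) set \<Rightarrow> bool" where
  "star_body n S \<longleftrightarrow> compact_body n S \<and> kernel n S \<noteq> {}"

definition eta :: "nat \<Rightarrow> (nat \<Rightarrow> real) set \<Rightarrow> real" where
  "eta n S = vol n (kernel n S) / vol n S"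

definition centrally_symmetric :: "nat \<Rightarrow> (nat \<Rightarrow> real) set \<Rightarrow> bool" where
  "centrally_symmetric n S \<longleftrightarrow> S = (\<lambda>x. restrict (\<lambda>i. - x i) {..<n}) ` S"

end

theory Submission
  imports Defs
begin

text \<open>
  The body of the theorem is a centrally symmetric ``flared prism''.  For parameters
  \<open>0 < c < L\<close> and a slope \<open>m > 0\<close> with \<open>m c \<le> 1/4\<close> put \<open>g s = 1 + m max 0 (s - c)\<close> and
  \<open>S = {x. |x\<^sub>0| \<le> L \<and> |x\<^sub>i| \<le> g |x\<^sub>0| for 1 \<le> i < n}\<close>: over \<open>|x\<^sub>0| \<le> c\<close> it is the cylinder
  over the unit cube \<open>[-1,1]\<^sup>n\<^sup>-\<^sup>1\<close>, beyond that its cubical cross sections grow linearly.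
  Every constraint couples \<open>x\<^sub>0\<close> with one other coordinate, so the kernel of \<open>S\<close> is
  governed by the kernel of the planar profile \<open>{(t,y). |t| \<le> L \<and> |y| \<le> g |t|}\<close>; it contains
  the box \<open>[-c,c] \<times> [-q,q]\<^sup>n\<^sup>-\<^sup>1\<close> with \<open>q = 1 - 2mc\<close>.  Integrating the cross sections along
  \<open>x\<^sub>0\<close> gives \<open>vol S \<le> 2\<^sup>n\<^sup>-\<^sup>1 (2c + 2P)\<close> and both halves have volume \<open>\<ge> 2\<^sup>n\<^sup>-\<^sup>1 P\<close>, where
  \<open>P = (G\<^sup>n - 1)/(m n)\<close> and \<open>G = g L\<close>; the section \<open>x\<^sub>0 = 0\<close> is the unit cube.
\<close>

subsection \<open>Euclidean space \<open>\<real>\<^sup>n\<close>\<close>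

lemma edist_L2: "edist n x y = L2_set (\<lambda>i. x i - y i) {..<n}"
  by (simp add: edist_def L2_set_def)

lemma Rn_ext: "x \<in> Rn n \<Longrightarrow> y \<in> Rn n \<Longrightarrow> (\<And>i. i < n \<Longrightarrow> x i = y i) \<Longrightarrow> x = y"
  unfolding Rn_def by (rule PiE_ext) auto

lemma Metric_space_Rn: "Metric_space (Rn n) (edist n)"
proof
  fix x y z
  show "0 \<le> edist n x y" by (simp add: edist_def sum_nonneg)
  show "edist n x y = edist n y x" unfolding edist_def by (simp add: power2_commute)
  assume x: "x \<in> Rn n" and y: "y \<in> Rn n"
  show "(edist n x y = 0) = (x = y)"
  proof
    assume "edist n x y = 0"
    then have "\<forall>i\<in>{..<n}. x i - y i = 0" unfolding edist_L2 by (simp add: L2_set_eq_0_iff)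
    then show "x = y" using Rn_ext[OF x y] by auto
  qed (simp add: edist_def)
  assume "z \<in> Rn n"
  have "edist n x z = L2_set (\<lambda>i. (x i - y i) + (y i - z i)) {..<n}" by (simp add: edist_L2)
  also have "\<dots> \<le> edist n x y + edist n y z" unfolding edist_L2 by (rule L2_set_triangle_ineq)
  finally show "edist n x z \<le> edist n x y + edist n y z" .
qed

lemma edist_coord_le: "i < n \<Longrightarrow> \<bar>x i - y i\<bar> \<le> edist n x y"
  unfolding edist_L2 using member_le_L2_set[of "{..<n}" i "\<lambda>i. \<bar>x i - y i\<bar>"]
  by (simp add: L2_set_def)

text \<open>The Euclidean topology is coarser than the product topology (in fact they agree);
  this transfers compactness of products of intervals to \<open>etop n\<close>.\<close>
lemma continuous_map_product_etop:
  "continuous_map (product_topology (\<lambda>_. euclideanreal) {..<n}) (etop n) id"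
proof -
  interpret M: Metric_space "Rn n" "edist n" by (rule Metric_space_Rn)
  show ?thesis unfolding etop_def M.continuous_map_to_metric
  proof (intro ballI allI impI)
    fix x and e :: real
    assume x: "x \<in> topspace (product_topology (\<lambda>_. euclideanreal) {..<n})" and e: "e > 0"
    define r where "r = e / (real n + 1)"
    have r: "r > 0" using e by (simp add: r_def)
    let ?U = "PiE {..<n} (\<lambda>i. ball (x i) r)"
    show "\<exists>U. openin (product_topology (\<lambda>_. euclideanreal) {..<n}) U \<and> x \<in> U \<and>
              (\<forall>y\<in>U. id y \<in> M.mball (id x) e)"
    proof (intro exI conjI ballI)
      show "openin (product_topology (\<lambda>_. euclideanreal) {..<n}) ?U" by (simp add: openin_PiE)
      show "x \<in> ?U" using x r by (auto simp: PiE_iff)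
      fix y assume y: "y \<in> ?U"
      have "edist n x y \<le> (\<Sum>i<n. \<bar>x i - y i\<bar>)" unfolding edist_L2 by (rule L2_set_le_sum_abs)
      also have "\<dots> \<le> (\<Sum>i<n. r)" using y by (intro sum_mono) (force simp: PiE_iff dist_real_def)
      also have "\<dots> < e" using e by (simp add: r_def field_simps)
      finally have "edist n x y < e" .
      moreover have "x \<in> Rn n" "y \<in> Rn n" using x y by (auto simp: Rn_def PiE_iff)
      ultimately show "id y \<in> M.mball (id x) e" by simp
    qed
  qed
qed

subsection \<open>Sets defined by conditions on pairs of coordinates\<close>

lemma sets_coordinate_pairs:
  assumes W: "W \<in> sets borel" and n: "0 < n"
  shows "{x \<in> Rn n. \<forall>i\<in>{1..<n}. (x 0, x i) \<in> W} \<in> sets (Pi\<^sub>M {..<n} (\<lambda>_. lborel))"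
proof -
  have [measurable]: "W \<in> sets borel" "0 \<in> {..<n}" using assms by auto
  have [measurable]: "Measurable.pred (Pi\<^sub>M {..<n} (\<lambda>_. lborel)) (\<lambda>x. \<forall>i\<in>{1..<n}. (x 0, x i) \<in> W)"
  proof (rule pred_intros_finite(3))
    fix i assume "i \<in> {1..<n}"
    then have [measurable]: "i \<in> {..<n}" by simp
    show "Measurable.pred (Pi\<^sub>M {..<n} (\<lambda>_. lborel)) (\<lambda>x. (x 0, x i) \<in> W)" by measurable
  qed simp
  have "{x \<in> Rn n. \<forall>i\<in>{1..<n}. (x 0, x i) \<in> W} =
        {x \<in> space (Pi\<^sub>M {..<n} (\<lambda>_. lborel)). \<forall>i\<in>{1..<n}. (x 0, x i) \<in> W}"
    by (simp add: Rn_def space_PiM)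
  also have "\<dots> \<in> sets (Pi\<^sub>M {..<n} (\<lambda>_. lborel))" by measurable
  finally show ?thesis .
qed

lemma emeasure_slab:
  fixes h :: "real \<Rightarrow> real"
  assumes n2: "2 \<le> n" and hc: "continuous_on UNIV h" and h0: "\<And>t. a \<le> t \<Longrightarrow> t \<le> b \<Longrightarrow> 0 \<le> h t"
  shows "emeasure (Pi\<^sub>M {..<n} (\<lambda>_. lborel))
           {x \<in> Rn n. a \<le> x 0 \<and> x 0 \<le> b \<and> (\<forall>i\<in>{1..<n}. \<bar>x i\<bar> \<le> h (x 0))}
       = (\<integral>\<^sup>+ t. ennreal ((2 * h t) ^ (n - 1)) * indicator {a..b} t \<partial>lborel)"
proof -
  let ?M = "\<lambda>I. Pi\<^sub>M I (\<lambda>_::nat. lborel :: real measure)"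
  let ?A = "{x \<in> Rn n. a \<le> x 0 \<and> x 0 \<le> b \<and> (\<forall>i\<in>{1..<n}. \<bar>x i\<bar> \<le> h (x 0))}"
  let ?cube = "\<lambda>y. PiE {1..<n} (\<lambda>_. {- h y..h y})"
  define W where "W = {p. a \<le> fst p \<and> fst p \<le> b \<and> \<bar>snd p\<bar> \<le> h (fst p)}"
  have "closed W" unfolding W_def
    by (intro closed_Collect_conj closed_Collect_le continuous_intros continuous_on_compose2[OF hc]) auto
  have ins: "insert 0 {1..<n} = {..<n}" using n2 by auto
  have "?A = {x \<in> Rn n. \<forall>i\<in>{1..<n}. (x 0, x i) \<in> W}"
    using n2 by (auto simp: W_def Ball_def)
  also have "\<dots> \<in> sets (?M {..<n})"
    using n2 \<open>closed W\<close> by (intro sets_coordinate_pairs borel_closed) auto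
  finally have Am: "?A \<in> sets (?M (insert 0 {1..<n}))" unfolding ins .
  interpret product_sigma_finite "\<lambda>_::nat. lborel" by standard
  have fibre: "indicator ?A (x(0 := y)) = (indicator {a..b} y * indicator (?cube y) x :: ennreal)"
    if "x \<in> space (?M {1..<n})" for x y
  proof -
    have xe: "x \<in> extensional {1..<n}" using that by (simp add: space_PiM PiE_def)
    then have "x(0 := y) \<in> Rn n" using n2 by (auto simp: Rn_def PiE_def extensional_def)
    moreover have "(\<forall>i\<in>{1..<n}. \<bar>(x(0 := y)) i\<bar> \<le> h y) \<longleftrightarrow> x \<in> ?cube y"
      using xe by (auto simp: PiE_iff abs_le_iff)
    ultimately have "x(0 := y) \<in> ?A \<longleftrightarrow> y \<in> {a..b} \<and> x \<in> ?cube y" by auto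
    then show ?thesis unfolding indicator_def by simp
  qed
  have cube: "indicator {a..b} y * emeasure (?M {1..<n}) (?cube y) =
              ennreal ((2 * h y) ^ (n - 1)) * indicator {a..b} y" for y
  proof (cases "y \<in> {a..b}")
    case True
    then have hy: "0 \<le> h y" using h0 by auto
    have "emeasure (?M {1..<n}) (?cube y) = (\<Prod>i\<in>{1..<n}. emeasure lborel {- h y..h y})"
      by (rule emeasure_PiM) auto
    also have "\<dots> = ennreal ((2 * h y) ^ (n - 1))" using hy by (simp add: ennreal_power)
    finally show ?thesis using True by simp
  qed simp
  have "emeasure (?M {..<n}) ?A = emeasure (?M (insert 0 {1..<n})) ?A"
    by (simp only: ins)
  also have "\<dots> = (\<integral>\<^sup>+ x. indicator ?A x \<partial>?M (insert 0 {1..<n}))"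
    using Am by (simp add: nn_integral_indicator)
  also have "\<dots> = (\<integral>\<^sup>+ y. (\<integral>\<^sup>+ x. indicator ?A (x(0 := y)) \<partial>?M {1..<n}) \<partial>lborel)"
    by (intro product_nn_integral_insert_rev borel_measurable_indicator Am) auto
  also have "\<dots> = (\<integral>\<^sup>+ y. indicator {a..b} y * emeasure (?M {1..<n}) (?cube y) \<partial>lborel)"
  proof (rule nn_integral_cong)
    fix y :: real
    have "(\<integral>\<^sup>+ x. indicator ?A (x(0 := y)) \<partial>?M {1..<n}) =
          (\<integral>\<^sup>+ x. indicator {a..b} y * indicator (?cube y) x \<partial>?M {1..<n})"
      by (rule nn_integral_cong) (rule fibre)
    also have "\<dots> = indicator {a..b} y * emeasure (?M {1..<n}) (?cube y)"
      by (subst nn_integral_cmult_indicator) auto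
    finally show "(\<integral>\<^sup>+ x. indicator ?A (x(0 := y)) \<partial>?M {1..<n}) =
                  indicator {a..b} y * emeasure (?M {1..<n}) (?cube y)" .
  qed
  also have "\<dots> = (\<integral>\<^sup>+ t. ennreal ((2 * h t) ^ (n - 1)) * indicator {a..b} t \<partial>lborel)"
    by (simp only: cube)
  finally show ?thesis .
qed

lemma measure_le_of_emeasure: "emeasure M A \<le> ennreal r \<Longrightarrow> 0 \<le> r \<Longrightarrow> measure M A \<le> r"
  by (metis emeasure_eq_ennreal_measure ennreal_le_iff ennreal_neq_top neq_top_trans)

lemma measure_ge_of_emeasure: "ennreal r \<le> emeasure M A \<Longrightarrow> emeasure M A < \<infinity> \<Longrightarrow> r \<le> measure M A"
  by (metis emeasure_eq_ennreal_measure ennreal_le_iff2 less_irrefl measure_nonneg ennreal_le_iff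
      less_le_trans top.extremum_strict)


subsection \<open>The flared prism\<close>

locale flared_prism =
  fixes n :: nat and L m c :: real
  assumes n2: "2 \<le> n" and c_pos: "0 < c" and c_less_L: "c < L"
    and m_pos: "0 < m" and mc_le: "m * c \<le> 1/4"
begin

text \<open>Half-width of the cubical cross section at height \<open>x\<^sub>0 = \<plusminus>s\<close>.\<close>
definition g :: "real \<Rightarrow> real" where "g s = 1 + m * max 0 (s - c)"

definition S :: "(nat \<Rightarrow> real) set" where
  "S = {x \<in> Rn n. \<bar>x 0\<bar> \<le> L \<and> (\<forall>i\<in>{1..<n}. \<bar>x i\<bar> \<le> g \<bar>x 0\<bar>)}"

lemma n_pos: "0 < n" using n2 by linarith
lemma L_pos: "0 < L" using c_pos c_less_L by linarith
lemma g_ge_1: "1 \<le> g s" using m_pos by (simp add: g_def)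
lemma g_pos: "0 < g s" using g_ge_1[of s] by linarith
lemma g_cont: "continuous_on UNIV g" unfolding g_def by (intro continuous_intros)

lemma g_lipschitz: "\<bar>g a - g b\<bar> \<le> m * \<bar>a - b\<bar>"
proof -
  have "\<bar>max 0 (a - c) - max 0 (b - c)\<bar> \<le> \<bar>a - b\<bar>" unfolding max_def by (auto simp: abs_if)
  then have "m * \<bar>max 0 (a - c) - max 0 (b - c)\<bar> \<le> m * \<bar>a - b\<bar>"
    using m_pos by (simp add: mult_left_mono)
  then show ?thesis using m_pos by (simp add: g_def abs_mult flip: right_diff_distrib)
qed

lemma S_subset_Rn: "S \<subseteq> Rn n" by (auto simp: S_def)

lemma zero_in_S: "restrict (\<lambda>_. 0) {..<n} \<in> S"
  unfolding S_def Rn_def using L_pos n_pos g_pos[of 0] by auto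

text \<open>\<open>S\<close> is the image of the cube \<open>[-1,1]\<^sup>n\<close> under a continuous map, hence compact.\<close>
definition cube_to_S :: "(nat \<Rightarrow> real) \<Rightarrow> (nat \<Rightarrow> real)" where
  "cube_to_S u = restrict (\<lambda>i. if i = 0 then L * u 0 else g \<bar>L * u 0\<bar> * u i) {..<n}"

lemma S_eq_image_cube: "S = cube_to_S ` PiE {..<n} (\<lambda>_. {-1..1})"
proof
  show "cube_to_S ` PiE {..<n} (\<lambda>_. {-1..1}) \<subseteq> S"
  proof
    fix x assume "x \<in> cube_to_S ` PiE {..<n} (\<lambda>_. {-1..1})"
    then obtain u where u: "u \<in> PiE {..<n} (\<lambda>_. {-1..1})" and x: "x = cube_to_S u" by blast
    have u_le: "\<bar>u i\<bar> \<le> 1" if "i < n" for i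
    proof -
      have "u i \<in> {-1..1}" using u that by (auto simp: PiE_iff)
      then show ?thesis by (simp add: abs_le_iff)
    qed
    have "\<bar>L * u 0\<bar> \<le> L" using u_le[OF n_pos] L_pos by (simp add: abs_mult mult_left_le)
    moreover have "\<bar>g \<bar>L * u 0\<bar> * u i\<bar> \<le> g \<bar>L * u 0\<bar>" if "i \<in> {1..<n}" for i
      using u_le[of i] that g_pos[of "\<bar>L * u 0\<bar>"] by (simp add: abs_mult mult_left_le)
    ultimately show "x \<in> S" unfolding x S_def cube_to_S_def Rn_def using n_pos by auto
  qed
  show "S \<subseteq> cube_to_S ` PiE {..<n} (\<lambda>_. {-1..1})"
  proof
    fix x assume x: "x \<in> S"
    define u where "u = restrict (\<lambda>i. if i = 0 then x 0 / L else x i / g \<bar>x 0\<bar>) {..<n}"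
    have xR: "x \<in> Rn n" and x0: "\<bar>x 0\<bar> \<le> L" and xi: "\<And>i. i \<in> {1..<n} \<Longrightarrow> \<bar>x i\<bar> \<le> g \<bar>x 0\<bar>"
      using x by (auto simp: S_def)
    have u0: "\<bar>x 0 / L\<bar> \<le> 1" using x0 L_pos by (metis abs_div_pos divide_le_eq_1_pos)
    have ui: "\<bar>x i / g \<bar>x 0\<bar>\<bar> \<le> 1" if "i \<in> {1..<n}" for i
      using xi[OF that] g_pos[of "\<bar>x 0\<bar>"] by (metis abs_div_pos divide_le_eq_1_pos)
    have "u i \<in> {-1..1}" if "i < n" for i
    proof (cases "i = 0")
      case True then show ?thesis using abs_le_iff[THEN iffD1, OF u0] that by (simp add: u_def)
    next
      case False
      then show ?thesis using abs_le_iff[THEN iffD1, OF ui[of i]] that by (simp add: u_def)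
    qed
    then have "u \<in> PiE {..<n} (\<lambda>_. {-1..1})" unfolding u_def by (auto simp: PiE_iff)
    moreover have "cube_to_S u = x"
    proof (rule Rn_ext[OF _ xR])
      show "cube_to_S u \<in> Rn n" by (simp add: cube_to_S_def Rn_def)
      fix i assume "i < n"
      then show "cube_to_S u i = x i"
        using L_pos n_pos g_pos[of "\<bar>x 0\<bar>"] by (simp add: cube_to_S_def u_def)
    qed
    ultimately show "x \<in> cube_to_S ` PiE {..<n} (\<lambda>_. {-1..1})" by blast
  qed
qed

lemma continuous_cube_to_S:
  "continuous_map (product_topology (\<lambda>_. euclideanreal) {..<n})
     (product_topology (\<lambda>_. euclideanreal) {..<n}) cube_to_S"
  unfolding continuous_map_componentwise
proof (intro conjI ballI)
  let ?X = "product_topology (\<lambda>_. euclideanreal) {..<n}"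
  show "cube_to_S ` topspace ?X \<subseteq> extensional {..<n}" by (auto simp: cube_to_S_def)
  fix k :: nat assume k: "k \<in> {..<n}"
  have p0: "continuous_map ?X euclideanreal (\<lambda>x. x 0)" using n_pos by (intro continuous_intros) auto
  have pk: "continuous_map ?X euclideanreal (\<lambda>x. x k)" using k by (intro continuous_intros) auto
  have "continuous_map ?X euclideanreal (g \<circ> (\<lambda>x. \<bar>L * x 0\<bar>))"
    by (rule continuous_map_compose[where X'=euclideanreal]) (intro continuous_intros p0, simp add: g_cont)
  then have "continuous_map ?X euclideanreal (\<lambda>x. g \<bar>L * x 0\<bar> * x k)"
    using continuous_map_real_mult[OF _ pk] by (simp add: o_def)
  then have "continuous_map ?X euclideanreal (\<lambda>x. if k = 0 then L * x 0 else g \<bar>L * x 0\<bar> * x k)"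
    using continuous_map_real_mult_left[OF p0, of L] by (cases "k = 0") simp_all
  then show "continuous_map ?X euclideanreal (\<lambda>x. cube_to_S x k)" using k by (simp add: cube_to_S_def)
qed

lemma S_compact: "compactin (etop n) S"
proof -
  have "compactin (product_topology (\<lambda>_. euclideanreal) {..<n}) (PiE {..<n} (\<lambda>_. {-1..1::real}))"
    by (simp add: compactin_PiE)
  then have "compactin (etop n) (id ` cube_to_S ` PiE {..<n} (\<lambda>_. {-1..1}))"
    by (intro image_compactin[OF image_compactin[OF _ continuous_cube_to_S]] continuous_map_product_etop)
  then show ?thesis by (simp add: S_eq_image_cube)
qed

text \<open>Points satisfying all constraints strictly are interior: \<open>g\<close> is \<open>m\<close>-Lipschitz.\<close>
lemma interior_point:
  assumes xR: "x \<in> Rn n" and x0: "\<bar>x 0\<bar> < L" and xi: "\<And>i. i \<in> {1..<n} \<Longrightarrow> \<bar>x i\<bar> < g \<bar>x 0\<bar>"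
  shows "x \<in> etop n interior_of S"
proof -
  interpret M: Metric_space "Rn n" "edist n" by (rule Metric_space_Rn)
  define s where "s = Min ((\<lambda>i. g \<bar>x 0\<bar> - \<bar>x i\<bar>) ` {1..<n})"
  have s_pos: "s > 0" unfolding s_def using n2 xi by (subst Min_gr_iff) auto
  have slack: "\<bar>x i\<bar> + s \<le> g \<bar>x 0\<bar>" if "i \<in> {1..<n}" for i
  proof -
    have "s \<le> g \<bar>x 0\<bar> - \<bar>x i\<bar>" unfolding s_def using that by (intro Min_le) auto
    then show ?thesis by simp
  qed
  define r where "r = min (L - \<bar>x 0\<bar>) (s / (1 + m))"
  have r_pos: "r > 0" using x0 s_pos m_pos by (simp add: r_def)
  have "r \<le> s / (1 + m)" by (simp add: r_def)
  then have rm: "r * (1 + m) \<le> s" using m_pos by (simp add: le_divide_eq)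
  have "M.mball x r \<subseteq> S"
  proof
    fix y assume "y \<in> M.mball x r"
    then have yR: "y \<in> Rn n" and d: "edist n x y < r" by auto
    have d0: "\<bar>x 0 - y 0\<bar> < r" using edist_coord_le[of 0 n x y] n_pos d by simp
    have "\<bar>y i\<bar> \<le> g \<bar>y 0\<bar>" if i: "i \<in> {1..<n}" for i
    proof -
      have "\<bar>g \<bar>x 0\<bar> - g \<bar>y 0\<bar>\<bar> \<le> m * \<bar>\<bar>x 0\<bar> - \<bar>y 0\<bar>\<bar>" by (rule g_lipschitz)
      also have "\<dots> \<le> m * r" using d0 m_pos by (intro mult_left_mono) auto
      finally have "g \<bar>y 0\<bar> \<ge> g \<bar>x 0\<bar> - m * r" by linarith
      moreover have "\<bar>y i\<bar> < \<bar>x i\<bar> + r" using edist_coord_le[of i n x y] i d by simp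
      ultimately show ?thesis using slack[OF i] rm by (simp add: algebra_simps)
    qed
    moreover have "r \<le> L - \<bar>x 0\<bar>" by (simp add: r_def)
    then have "\<bar>y 0\<bar> \<le> L" using d0 by linarith
    ultimately show "y \<in> S" using yR by (simp add: S_def)
  qed
  then show ?thesis unfolding etop_def M.metric_interior_of using xR r_pos by blast
qed

text \<open>Shrinking towards the origin moves \<open>S\<close> into its interior; here \<open>m c < 1\<close> is used.\<close>
lemma shrink_in_interior:
  assumes x: "x \<in> S" and l0: "0 \<le> l" and l1: "l < 1"
  shows "restrict (\<lambda>i. l * x i) {..<n} \<in> etop n interior_of S"
proof (rule interior_point)
  have x0: "\<bar>x 0\<bar> \<le> L" and xi: "\<And>i. i \<in> {1..<n} \<Longrightarrow> \<bar>x i\<bar> \<le> g \<bar>x 0\<bar>"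
    using x by (auto simp: S_def)
  show "restrict (\<lambda>i. l * x i) {..<n} \<in> Rn n" by (simp add: Rn_def)
  have "\<bar>l * x 0\<bar> \<le> l * L" using x0 l0 by (simp add: abs_mult mult_left_mono)
  also have "\<dots> < L" using l1 L_pos by simp
  finally show "\<bar>restrict (\<lambda>i. l * x i) {..<n} 0\<bar> < L" using n_pos by simp
  have g_scale: "l * g t < g (l * t)" if "t \<ge> 0" for t
  proof (cases "t \<le> c")
    case True
    then show ?thesis using l1 g_ge_1[of "l * t"] by (simp add: g_def)
  next
    case False
    have "(1 - l) * (m * c - 1) < 0" using l1 mc_le by (intro mult_pos_neg) auto
    then have "l * (1 + m * (t - c)) < 1 + m * (l * t - c)" by (simp add: algebra_simps)
    moreover have "g (l * t) \<ge> 1 + m * (l * t - c)" using m_pos by (simp add: g_def mult_left_mono)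
    ultimately show ?thesis using False by (simp add: g_def)
  qed
  fix i assume i: "i \<in> {1..<n}"
  have "\<bar>l * x i\<bar> \<le> l * g \<bar>x 0\<bar>" using xi[OF i] l0 by (simp add: abs_mult mult_left_mono)
  also have "\<dots> < g (l * \<bar>x 0\<bar>)" by (rule g_scale) simp
  finally show "\<bar>restrict (\<lambda>i. l * x i) {..<n} i\<bar> < g \<bar>restrict (\<lambda>i. l * x i) {..<n} 0\<bar>"
    using i n_pos l0 by (simp add: abs_mult)
qed

lemma S_compact_body: "compact_body n S"
proof -
  interpret M: Metric_space "Rn n" "edist n" by (rule Metric_space_Rn)
  have closed: "closedin (etop n) S"
    using S_compact compactin_imp_closedin M.Hausdorff_space_mtopology by (simp add: etop_def)
  have "restrict (\<lambda>i. 0 * (restrict (\<lambda>_. 0::real) {..<n}) i) {..<n} \<in> etop n interior_of S"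
    by (rule shrink_in_interior[OF zero_in_S]) auto
  then have nonempty: "etop n interior_of S \<noteq> {}" by blast
  have "S \<subseteq> etop n closure_of (etop n interior_of S)"
  proof
    fix x assume x: "x \<in> S"
    then have xR: "x \<in> Rn n" by (simp add: S_def)
    show "x \<in> etop n closure_of (etop n interior_of S)"
      unfolding etop_def M.metric_closure_of
    proof (intro CollectI conjI allI impI xR)
      fix r :: real assume r: "r > 0"
      define R where "R = L2_set x {..<n}"
      have R0: "R \<ge> 0" by (simp add: R_def)
      define t where "t = min (1/2) (r / (R + 1))"
      have t0: "t > 0" using r R0 by (auto simp: t_def)
      have t1: "t \<le> 1/2" unfolding t_def by (rule min.cobounded1)
      have "t * R \<le> r / (R + 1) * R" using R0 by (intro mult_right_mono) (auto simp: t_def)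
      also have "\<dots> < r" using r R0 by (simp add: field_simps)
      finally have tR: "t * R < r" .
      define y where "y = restrict (\<lambda>i. (1 - t) * x i) {..<n}"
      have y_int: "y \<in> etop n interior_of S" unfolding y_def using t0 t1 by (intro shrink_in_interior x) auto
      have "edist n x y = L2_set (\<lambda>i. t * x i) {..<n}"
        unfolding edist_L2 y_def by (intro L2_set_cong) (auto simp: algebra_simps)
      also have "\<dots> = t * R" unfolding R_def using t0 by (simp add: L2_set_right_distrib)
      finally have "edist n x y < r" using tR by simp
      moreover have "y \<in> Rn n" by (simp add: y_def Rn_def)
      ultimately show "\<exists>y\<in>M.mtopology interior_of S. y \<in> M.mball x r"
        using y_int xR by (auto simp: etop_def)
    qed
  qed
  moreover have "etop n closure_of (etop n interior_of S) \<subseteq> S"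
    by (rule closure_of_minimal[OF interior_of_subset closed])
  ultimately show ?thesis unfolding compact_body_def using S_subset_Rn S_compact nonempty by blast
qed

lemma S_centrally_symmetric: "centrally_symmetric n S"
  unfolding centrally_symmetric_def
proof
  let ?f = "\<lambda>x. restrict (\<lambda>i. - x i) {..<n}"
  have fS: "?f x \<in> S" if "x \<in> S" for x using that n_pos by (auto simp: S_def Rn_def)
  show "S \<subseteq> ?f ` S"
  proof
    fix x assume x: "x \<in> S"
    then have "?f (?f x) = x" by (intro Rn_ext[of _ n x]) (auto simp: S_def Rn_def)
    then show "x \<in> ?f ` S" using fS[OF x] by (metis image_eqI)
  qed
  show "?f ` S \<subseteq> S" using fS by blast
qed


subsubsection \<open>The kernel\<close>

definition profile :: "(real \<times> real) set" where
  "profile = {(a, b). \<bar>a\<bar> \<le> L \<and> \<bar>b\<bar> \<le> g \<bar>a\<bar>}"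

definition profile_kernel :: "(real \<times> real) set" where
  "profile_kernel = {(a, b). \<forall>y0 y1 t. (y0, y1) \<in> profile \<and> 0 \<le> t \<and> t \<le> 1 \<longrightarrow>
      ((1 - t) * a + t * y0, (1 - t) * b + t * y1) \<in> profile}"

lemma S_eq_profile: "S = {x \<in> Rn n. \<forall>i\<in>{1..<n}. (x 0, x i) \<in> profile}"
  using n2 by (auto simp: S_def profile_def Ball_def)

text \<open>Because the constraints only couple \<open>x\<^sub>0\<close> with single coordinates, a point sees all of
  \<open>S\<close> iff each of its planar projections \<open>(x\<^sub>0, x\<^sub>i)\<close> sees the whole profile.\<close>
lemma kernel_eq_profile_kernel: "kernel n S = {x \<in> S. \<forall>i\<in>{1..<n}. (x 0, x i) \<in> profile_kernel}"
proof
  show "kernel n S \<subseteq> {x \<in> S. \<forall>i\<in>{1..<n}. (x 0, x i) \<in> profile_kernel}"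
  proof
    fix x assume "x \<in> kernel n S"
    then have xS: "x \<in> S" and seg: "\<And>y. y \<in> S \<Longrightarrow> segment n x y \<subseteq> S" by (auto simp: kernel_def)
    have "(x 0, x i) \<in> profile_kernel" if i: "i \<in> {1..<n}" for i
      unfolding profile_kernel_def
    proof (intro CollectI case_prodI allI impI, elim conjE)
      fix y0 y1 t :: real assume T: "(y0, y1) \<in> profile" and t0: "0 \<le> t" and t1: "t \<le> 1"
      define y where "y = restrict (\<lambda>j. if j = 0 then y0 else if j = i then y1 else 0) {..<n}"
      define p where "p = restrict (\<lambda>j. (1 - t) * x j + t * y j) {..<n}"
      have "y \<in> S" unfolding S_def Rn_def y_def
        using T i n_pos g_pos[of "\<bar>y0\<bar>"] by (auto simp: profile_def)
      moreover have "p \<in> segment n x y" unfolding segment_def p_def using t0 t1 by blast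
      ultimately have "p \<in> S" using seg by blast
      then have "(p 0, p i) \<in> profile" using i unfolding S_eq_profile by blast
      then show "((1 - t) * x 0 + t * y0, (1 - t) * x i + t * y1) \<in> profile"
        using i n_pos by (simp add: p_def y_def)
    qed
    then show "x \<in> {x \<in> S. \<forall>i\<in>{1..<n}. (x 0, x i) \<in> profile_kernel}" using xS by blast
  qed
  show "{x \<in> S. \<forall>i\<in>{1..<n}. (x 0, x i) \<in> profile_kernel} \<subseteq> kernel n S"
  proof
    fix x assume "x \<in> {x \<in> S. \<forall>i\<in>{1..<n}. (x 0, x i) \<in> profile_kernel}"
    then have xS: "x \<in> S" and xQ: "\<And>i. i \<in> {1..<n} \<Longrightarrow> (x 0, x i) \<in> profile_kernel" by auto
    have "segment n x y \<subseteq> S" if yS: "y \<in> S" for y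
    proof
      fix p assume "p \<in> segment n x y"
      then obtain t where t: "0 \<le> t" "t \<le> 1" and p: "p = restrict (\<lambda>j. (1 - t) * x j + t * y j) {..<n}"
        by (auto simp: segment_def)
      have "(p 0, p i) \<in> profile" if i: "i \<in> {1..<n}" for i
        using xQ[OF i] yS t i n_pos unfolding profile_kernel_def p S_eq_profile by auto
      then show "p \<in> S" unfolding S_eq_profile using p by (simp add: Rn_def)
    qed
    then show "x \<in> kernel n S" using xS by (simp add: kernel_def)
  qed
qed

lemma profile_closed: "closed profile"
proof -
  have "profile = {p. \<bar>fst p\<bar> \<le> L} \<inter> {p. \<bar>snd p\<bar> \<le> 1 + m * max 0 (\<bar>fst p\<bar> - c)}"
    by (auto simp: profile_def g_def)
  also have "closed \<dots>" by (intro closed_Int closed_Collect_le continuous_intros)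
  finally show ?thesis .
qed

lemma profile_kernel_closed: "closed profile_kernel"
proof -
  let ?T = "{w. (fst w, fst (snd w)) \<in> profile \<and> 0 \<le> snd (snd w) \<and> snd (snd w) \<le> 1}"
  have "profile_kernel = (\<Inter>w\<in>?T.
      {p. \<bar>(1 - snd (snd w)) * fst p + snd (snd w) * fst w\<bar> \<le> L} \<inter>
      {p. \<bar>(1 - snd (snd w)) * snd p + snd (snd w) * fst (snd w)\<bar> \<le>
          1 + m * max 0 (\<bar>(1 - snd (snd w)) * fst p + snd (snd w) * fst w\<bar> - c)})"
    unfolding profile_kernel_def by (auto simp: profile_def g_def)
  also have "closed \<dots>" by (intro closed_INT ballI closed_Int closed_Collect_le continuous_intros)
  finally show ?thesis .
qed

text \<open>The box \<open>[-c,c] \<times> [-q,q]\<close>, \<open>q = 1 - 2mc\<close>, lies in the kernel of the profile: segments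
  towards the flared part stay inside because the cross sections grow linearly.\<close>
definition q :: real where "q = 1 - 2 * m * c"

lemma q_ge_half: "1/2 \<le> q" using mc_le by (simp add: q_def)

lemma q_le_1: "q \<le> 1" using m_pos c_pos by (simp add: q_def)

lemma box_in_profile_kernel:
  assumes a: "\<bar>a\<bar> \<le> c" and b: "\<bar>b\<bar> \<le> q"
  shows "(a, b) \<in> profile_kernel"
  unfolding profile_kernel_def
proof (intro CollectI case_prodI allI impI, elim conjE)
  fix y0 y1 t :: real assume T: "(y0, y1) \<in> profile" and t0: "0 \<le> t" and t1: "t \<le> 1"
  have y0: "\<bar>y0\<bar> \<le> L" and y1: "\<bar>y1\<bar> \<le> g \<bar>y0\<bar>" using T by (auto simp: profile_def)
  define p0 where "p0 = (1 - t) * a + t * y0"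
  define p1 where "p1 = (1 - t) * b + t * y1"
  have a': "(1 - t) * \<bar>a\<bar> \<le> (1 - t) * c" using a t1 by (intro mult_left_mono) auto
  have p0_upper: "\<bar>p0\<bar> \<le> (1 - t) * \<bar>a\<bar> + t * \<bar>y0\<bar>"
    unfolding p0_def using t0 t1 abs_triangle_ineq[of "(1-t)*a" "t*y0"] by (simp add: abs_mult)
  have p0_lower: "t * \<bar>y0\<bar> - (1 - t) * \<bar>a\<bar> \<le> \<bar>p0\<bar>"
    unfolding p0_def using t0 t1 abs_triangle_ineq4[of "(1-t)*a + t*y0" "(1-t)*a"] by (simp add: abs_mult)
  have p1_upper: "\<bar>p1\<bar> \<le> (1 - t) * q + t * g \<bar>y0\<bar>"
  proof -
    have "\<bar>p1\<bar> \<le> (1 - t) * \<bar>b\<bar> + t * \<bar>y1\<bar>"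
      unfolding p1_def using t0 t1 abs_triangle_ineq[of "(1-t)*b" "t*y1"] by (simp add: abs_mult)
    also have "\<dots> \<le> (1 - t) * q + t * g \<bar>y0\<bar>"
      using b y1 t0 t1 by (intro add_mono mult_left_mono) auto
    finally show ?thesis .
  qed
  have "(1 - t) * c \<le> (1 - t) * L" "t * \<bar>y0\<bar> \<le> t * L"
    using c_less_L y0 t0 t1 by (auto intro: mult_left_mono)
  then have p0L: "\<bar>p0\<bar> \<le> L" using p0_upper a' by (simp add: algebra_simps)
  have mc0: "0 \<le> m * c" using m_pos c_pos by simp
  have "\<bar>p1\<bar> \<le> g \<bar>p0\<bar>"
  proof (cases "\<bar>y0\<bar> \<le> c")
    case True
    then have "\<bar>p1\<bar> \<le> (1 - t) * q + t" using p1_upper by (simp add: g_def)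
    also have "\<dots> \<le> 1" using t1 mc0 mult_nonneg_nonneg[of "1-t" "m*c"] by (simp add: q_def algebra_simps)
    also have "\<dots> \<le> g \<bar>p0\<bar>" by (rule g_ge_1)
    finally show ?thesis .
  next
    case False
    have "m * (t * \<bar>y0\<bar> - (1 - t) * c) \<le> m * \<bar>p0\<bar>"
      using p0_lower a' m_pos by (intro mult_left_mono) auto
    then have "(1 - t) * q + t * (1 + m * (\<bar>y0\<bar> - c)) \<le> 1 + m * (\<bar>p0\<bar> - c)"
      by (simp add: q_def algebra_simps)
    moreover have "1 + m * (\<bar>p0\<bar> - c) \<le> g \<bar>p0\<bar>" using m_pos by (simp add: g_def mult_left_mono)
    ultimately show ?thesis using p1_upper False by (simp add: g_def)
  qed
  then show "((1 - t) * a + t * y0, (1 - t) * b + t * y1) \<in> profile"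
    using p0L unfolding profile_def p0_def p1_def by simp
qed

definition kernel_box :: "(nat \<Rightarrow> real) set" where
  "kernel_box = PiE {..<n} (\<lambda>i. if i = 0 then {-c..c} else {-q..q})"

lemma kernel_box_subset: "kernel_box \<subseteq> kernel n S"
proof
  fix x assume x: "x \<in> kernel_box"
  have x_mem: "x i \<in> (if i = 0 then {-c..c} else {-q..q})" if "i < n" for i
    using x that by (auto simp: kernel_box_def PiE_iff)
  have x0: "\<bar>x 0\<bar> \<le> c" using x_mem[OF n_pos] by (simp add: abs_le_iff)
  have xi: "\<bar>x i\<bar> \<le> q" if "i \<in> {1..<n}" for i using x_mem[of i] that by (simp add: abs_le_iff)
  have "\<bar>x i\<bar> \<le> g \<bar>x 0\<bar>" if "i \<in> {1..<n}" for i
    using xi[OF that] q_le_1 g_ge_1[of "\<bar>x 0\<bar>"] by linarith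
  then have "x \<in> S" using x x0 c_less_L by (auto simp: S_def Rn_def kernel_box_def PiE_def)
  then show "x \<in> kernel n S" using x0 xi box_in_profile_kernel by (auto simp: kernel_eq_profile_kernel)
qed

lemma S_star_body: "star_body n S"
proof -
  have "restrict (\<lambda>_. 0) {..<n} \<in> kernel_box" using c_pos q_ge_half by (auto simp: kernel_box_def)
  then show ?thesis unfolding star_body_def using S_compact_body kernel_box_subset by blast
qed

subsubsection \<open>Volumes\<close>

abbreviation "MM \<equiv> Pi\<^sub>M {..<n} (\<lambda>_. lborel :: real measure)"

lemma S_sets: "S \<in> sets MM"
  unfolding S_eq_profile using profile_closed n_pos by (intro sets_coordinate_pairs borel_closed)

lemma kernel_sets: "kernel n S \<in> sets MM"
proof -
  have "kernel n S = {x \<in> Rn n. \<forall>i\<in>{1..<n}. (x 0, x i) \<in> profile \<inter> profile_kernel}"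
    by (subst kernel_eq_profile_kernel) (auto simp: S_eq_profile)
  also have "\<dots> \<in> sets MM" using profile_closed profile_kernel_closed n_pos
    by (intro sets_coordinate_pairs borel_closed closed_Int)
  finally show ?thesis .
qed

lemma halfspace_sets: "S \<inter> {x. P (x 0)} \<in> sets MM" if [measurable]: "Measurable.pred borel P"
proof -
  have [measurable]: "0 \<in> {..<n}" using n_pos by simp
  have [measurable]: "S \<in> sets MM" by (rule S_sets)
  have "S \<inter> {x. P (x 0)} = S \<inter> {x \<in> space MM. P (x 0)}" using S_subset_Rn by (auto simp: Rn_def space_PiM)
  also have "\<dots> \<in> sets MM" by measurable
  finally show ?thesis .
qed


lemma emeasure_S_slab:
  assumes "-L \<le> a" "b \<le> L"
  shows "emeasure MM (S \<inter> {x. a \<le> x 0 \<and> x 0 \<le> b}) =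
         (\<integral>\<^sup>+ t. ennreal ((2 * g \<bar>t\<bar>) ^ (n - 1)) * indicator {a..b} t \<partial>lborel)"
proof -
  have "S \<inter> {x. a \<le> x 0 \<and> x 0 \<le> b} =
        {x \<in> Rn n. a \<le> x 0 \<and> x 0 \<le> b \<and> (\<forall>i\<in>{1..<n}. \<bar>x i\<bar> \<le> g \<bar>x 0\<bar>)}"
    using assms by (auto simp: S_def)
  also have "emeasure MM \<dots> = (\<integral>\<^sup>+ t. ennreal ((2 * g \<bar>t\<bar>) ^ (n - 1)) * indicator {a..b} t \<partial>lborel)"
    using g_pos by (intro emeasure_slab n2 continuous_on_compose2[OF g_cont] continuous_intros)
      (auto simp: less_imp_le)
  finally show ?thesis .
qed

lemma g_measurable [measurable]: "g \<in> borel_measurable borel"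
  by (rule borel_measurable_continuous_onI[OF g_cont])

definition G :: real where "G = 1 + m * (L - c)"
definition P :: real where "P = (G ^ n - 1) / (m * n)"

lemma G_gt_1: "1 < G" using m_pos c_less_L by (simp add: G_def)

lemma P_pos: "0 < P"
proof -
  have "1 < G ^ n" using G_gt_1 n_pos by (simp add: one_less_power)
  then show ?thesis using m_pos n_pos by (simp add: P_def)
qed

lemma integral_middle:
  "(\<integral>\<^sup>+ t. ennreal ((2 * g \<bar>t\<bar>) ^ (n - 1)) * indicator {-c..c} t \<partial>lborel) = ennreal (2 ^ (n - 1) * (2 * c))"
proof -
  have "(\<integral>\<^sup>+ t. ennreal ((2 * g \<bar>t\<bar>) ^ (n - 1)) * indicator {-c..c} t \<partial>lborel) =
        (\<integral>\<^sup>+ t. ennreal (2 ^ (n - 1)) * indicator {-c..c} t \<partial>lborel)"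
    by (intro nn_integral_cong) (auto simp: g_def indicator_def)
  also have "\<dots> = ennreal (2 ^ (n - 1)) * emeasure lborel {-c..c}"
    by (rule nn_integral_cmult_indicator) simp
  also have "\<dots> = ennreal (2 ^ (n - 1) * (2 * c))" using c_pos by (simp add: ennreal_mult)
  finally show ?thesis .
qed

lemma integral_right:
  "(\<integral>\<^sup>+ t. ennreal ((2 * g \<bar>t\<bar>) ^ (n - 1)) * indicator {c..L} t \<partial>lborel) = ennreal (2 ^ (n - 1) * P)"
proof -
  define f where "f t = 2 ^ (n - 1) * (1 + m * (t - c)) ^ (n - 1)" for t
  define F where "F t = 2 ^ (n - 1) * (1 + m * (t - c)) ^ n / (m * n)" for t
  have "(\<integral>\<^sup>+ t. ennreal ((2 * g \<bar>t\<bar>) ^ (n - 1)) * indicator {c..L} t \<partial>lborel) =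
        (\<integral>\<^sup>+ t. ennreal (f t) * indicator {c..L} t \<partial>lborel)"
  proof (rule nn_integral_cong)
    fix t :: real
    show "ennreal ((2 * g \<bar>t\<bar>) ^ (n - 1)) * indicator {c..L} t = ennreal (f t) * indicator {c..L} t"
    proof (cases "t \<in> {c..L}")
      case True
      then have "g \<bar>t\<bar> = 1 + m * (t - c)" using c_pos by (simp add: g_def)
      then have "(2 * g \<bar>t\<bar>) ^ (n - 1) = f t" by (simp only: f_def power_mult_distrib)
      then show ?thesis by (simp only:)
    qed simp
  qed
  also have "\<dots> = ennreal (F L - F c)"
  proof (rule nn_integral_FTC_Icc)
    fix x :: real assume "x \<in> {c..L}"
    then show "0 \<le> f x" unfolding f_def using m_pos by simp
    have "((\<lambda>t. 2 ^ (n - 1) * (1 + m * (t - c)) ^ n / (m * n)) has_real_derivative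
           2 ^ (n - 1) * (real n * (1 + m * (x - c)) ^ (n - 1) * m) / (m * n)) (at x)"
      by (auto intro!: derivative_eq_intros)
    moreover have "2 ^ (n - 1) * (real n * (1 + m * (x - c)) ^ (n - 1) * m) / (m * n) = f x"
      using m_pos n_pos by (simp add: f_def field_simps)
    ultimately show "(F has_real_derivative f x) (at x)" unfolding F_def by simp
  qed (use c_less_L in \<open>auto simp: f_def intro!: borel_measurable_continuous_onI continuous_intros\<close>)
  also have "F L - F c = 2 ^ (n - 1) * P"
    using m_pos n_pos by (simp add: F_def P_def G_def field_simps)
  finally show ?thesis .
qed

text \<open>The left end is the mirror image of the right one.\<close>
lemma integral_left:
  "(\<integral>\<^sup>+ t. ennreal ((2 * g \<bar>t\<bar>) ^ (n - 1)) * indicator {-L..-c} t \<partial>lborel) = ennreal (2 ^ (n - 1) * P)"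
proof -
  let ?h = "\<lambda>t. ennreal ((2 * g \<bar>t\<bar>) ^ (n - 1)) * indicator {c..L} t"
  have "(\<integral>\<^sup>+ t. ?h t \<partial>lborel) = (\<integral>\<^sup>+ t. ?h (0 + -1 * t) \<partial>lborel)"
    using nn_integral_real_affine[of ?h "-1" 0] by simp
  also have "\<dots> = (\<integral>\<^sup>+ t. ennreal ((2 * g \<bar>t\<bar>) ^ (n - 1)) * indicator {-L..-c} t \<partial>lborel)"
    by (intro nn_integral_cong) (auto simp: indicator_def)
  finally show ?thesis using integral_right by simp
qed

lemma emeasure_S_le: "emeasure MM S \<le> ennreal (2 ^ (n - 1) * (2 * c + 2 * P))"
proof -
  let ?f = "\<lambda>t. ennreal ((2 * g \<bar>t\<bar>) ^ (n - 1))"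
  have "emeasure MM S = emeasure MM (S \<inter> {x. -L \<le> x 0 \<and> x 0 \<le> L})"
    by (rule arg_cong[where f = "emeasure MM"]) (auto simp: S_def)
  also have "\<dots> = (\<integral>\<^sup>+ t. ?f t * indicator {-L..L} t \<partial>lborel)" by (rule emeasure_S_slab) auto
  also have "\<dots> \<le> (\<integral>\<^sup>+ t. (?f t * indicator {-L..-c} t + ?f t * indicator {-c..c} t)
                          + ?f t * indicator {c..L} t \<partial>lborel)"
    by (intro nn_integral_mono) (auto simp: indicator_def)
  also have "\<dots> = (\<integral>\<^sup>+ t. ?f t * indicator {-L..-c} t + ?f t * indicator {-c..c} t \<partial>lborel)
                 + (\<integral>\<^sup>+ t. ?f t * indicator {c..L} t \<partial>lborel)"
    by (rule nn_integral_add) auto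
  also have "\<dots> = (\<integral>\<^sup>+ t. ?f t * indicator {-L..-c} t \<partial>lborel) + (\<integral>\<^sup>+ t. ?f t * indicator {-c..c} t \<partial>lborel)
                 + (\<integral>\<^sup>+ t. ?f t * indicator {c..L} t \<partial>lborel)"
    by (subst nn_integral_add) auto
  also have "\<dots> = ennreal (2 ^ (n - 1) * P) + ennreal (2 ^ (n - 1) * (2 * c)) + ennreal (2 ^ (n - 1) * P)"
    by (simp only: integral_left integral_middle integral_right)
  also have "\<dots> = ennreal (2 ^ (n - 1) * (2 * c + 2 * P))"
    using P_pos c_pos by (simp add: ennreal_plus[symmetric] algebra_simps del: ennreal_plus)
  finally show ?thesis .
qed

lemma emeasure_subset_S_finite: "A \<subseteq> S \<Longrightarrow> emeasure MM A < \<infinity>"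
  using emeasure_mono[OF _ S_sets, of A] emeasure_S_le by (simp add: le_less_trans)

lemma vol_S_le: "vol n S \<le> 2 ^ (n - 1) * (2 * c + 2 * P)"
  unfolding vol_def using emeasure_S_le P_pos c_pos by (intro measure_le_of_emeasure) auto

text \<open>Each half of \<open>S\<close> contains a flared end, of volume \<open>2\<^sup>n\<^sup>-\<^sup>1 P\<close>.\<close>
lemma vol_part_ge:
  assumes H: "S \<inter> H \<in> sets MM" and ab: "-L \<le> a" "b \<le> L"
    and sub: "S \<inter> {x. a \<le> x 0 \<and> x 0 \<le> b} \<subseteq> H"
    and int: "(\<integral>\<^sup>+ t. ennreal ((2 * g \<bar>t\<bar>) ^ (n - 1)) * indicator {a..b} t \<partial>lborel) = ennreal (2 ^ (n - 1) * P)"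
  shows "2 ^ (n - 1) * P \<le> vol n (S \<inter> H)"
proof -
  have "ennreal (2 ^ (n - 1) * P) = emeasure MM (S \<inter> {x. a \<le> x 0 \<and> x 0 \<le> b})"
    by (simp only: emeasure_S_slab[OF ab] int)
  also have "\<dots> \<le> emeasure MM (S \<inter> H)" using sub by (intro emeasure_mono H) auto
  finally show ?thesis
    unfolding vol_def by (rule measure_ge_of_emeasure) (rule emeasure_subset_S_finite, blast)
qed

lemma vol_lower_half_ge: "2 ^ (n - 1) * P \<le> vol n (S \<inter> {x. x 0 \<le> 0})"
proof (rule vol_part_ge[OF _ _ _ _ integral_left])
  show "S \<inter> {x. x 0 \<le> 0} \<in> sets MM" by (rule halfspace_sets) measurable
qed (use c_pos c_less_L in auto)

lemma vol_upper_half_ge: "2 ^ (n - 1) * P \<le> vol n (S \<inter> {x. x 0 \<ge> 0})"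
proof (rule vol_part_ge[OF _ _ _ _ integral_right])
  show "S \<inter> {x. x 0 \<ge> 0} \<in> sets MM" by (rule halfspace_sets) measurable
qed (use c_pos c_less_L in auto)

lemma vol_S_pos: "0 < vol n S"
proof -
  have "2 ^ (n - 1) * P \<le> vol n (S \<inter> {x. x 0 \<ge> 0})" by (rule vol_upper_half_ge)
  also have "\<dots> \<le> vol n S"
    unfolding vol_def
    using halfspace_sets[of "\<lambda>t. t \<ge> 0"] emeasure_subset_S_finite[of S]
    by (intro measure_mono_fmeasurable) (auto simp: fmeasurable_def S_sets)
  moreover have "0 < 2 ^ (n - 1) * P" using P_pos by simp
  ultimately show ?thesis by linarith
qed

lemma vol_kernel_ge: "2 * c * (2 * q) ^ (n - 1) \<le> vol n (kernel n S)"
proof -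
  interpret product_sigma_finite "\<lambda>_::nat. lborel :: real measure" by standard
  have ins: "{..<n} = insert 0 {1..<n}" using n_pos by auto
  have box_sets: "kernel_box \<in> sets MM" unfolding kernel_box_def by (intro sets_PiM_I_finite) auto
  have "emeasure MM kernel_box = (\<Prod>i\<in>{..<n}. emeasure lborel (if i = 0 then {-c..c} else {-q..q}))"
    unfolding kernel_box_def by (rule emeasure_PiM) auto
  also have "\<dots> = ennreal (2 * c) * ennreal (2 * q) ^ (n - 1)"
    using c_pos q_ge_half by (subst ins) (simp add: prod.insert)
  also have "\<dots> = ennreal (2 * c) * ennreal ((2 * q) ^ (n - 1))"
    using q_ge_half by (subst ennreal_power) auto
  also have "\<dots> = ennreal (2 * c * (2 * q) ^ (n - 1))" using c_pos q_ge_half by (subst ennreal_mult) auto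
  finally have "measure MM kernel_box = 2 * c * (2 * q) ^ (n - 1)"
    using c_pos q_ge_half by (simp add: measure_def)
  moreover have "measure MM kernel_box \<le> measure MM (kernel n S)"
    using kernel_box_subset box_sets kernel_sets emeasure_subset_S_finite[of "kernel n S"]
    by (intro measure_mono_fmeasurable) (auto simp: fmeasurable_def kernel_def)
  ultimately show ?thesis by (simp add: vol_def)
qed

lemma hyperplane_section: "(\<lambda>x. restrict x {1..<n}) ` {x \<in> S. x 0 = 0} = PiE {1..<n} (\<lambda>_. {-1..1})"
proof
  have g0: "g 0 = 1" using c_pos by (simp add: g_def)
  show "(\<lambda>x. restrict x {1..<n}) ` {x \<in> S. x 0 = 0} \<subseteq> PiE {1..<n} (\<lambda>_. {-1..1})"
  proof
    fix z assume "z \<in> (\<lambda>x. restrict x {1..<n}) ` {x \<in> S. x 0 = 0}"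
    then obtain x where x: "x \<in> S" "x 0 = 0" and z: "z = restrict x {1..<n}" by blast
    have "x i \<in> {-1..1}" if "i \<in> {1..<n}" for i
    proof -
      have "\<bar>x i\<bar> \<le> 1" using x that g0 by (auto simp: S_def)
      then show ?thesis unfolding atLeastAtMost_iff abs_le_iff by linarith
    qed
    then show "z \<in> PiE {1..<n} (\<lambda>_. {-1..1})" unfolding z by (simp add: PiE_iff)
  qed
  show "PiE {1..<n} (\<lambda>_. {-1..1}) \<subseteq> (\<lambda>x. restrict x {1..<n}) ` {x \<in> S. x 0 = 0}"
  proof
    fix z :: "nat \<Rightarrow> real" assume z: "z \<in> PiE {1..<n} (\<lambda>_. {-1..1})"
    define x where "x = z(0 := 0)"
    have ze: "z \<in> extensional {1..<n}" using z by (simp add: PiE_def)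
    have xR: "x \<in> Rn n" using ze n_pos by (auto simp: Rn_def PiE_def extensional_def x_def)
    have "\<bar>x i\<bar> \<le> g \<bar>x 0\<bar>" if i: "i \<in> {1..<n}" for i
    proof -
      have "z i \<in> {-1..1}" using z i by (auto simp: PiE_iff)
      then show ?thesis using i g0 unfolding atLeastAtMost_iff abs_le_iff by (simp add: x_def)
    qed
    then have "x \<in> S" using xR L_pos by (auto simp: S_def x_def)
    moreover have "restrict x {1..<n} = z" using ze by (auto simp: x_def extensional_def fun_eq_iff)
    moreover have "x 0 = 0" by (simp add: x_def)
    ultimately show "z \<in> (\<lambda>x. restrict x {1..<n}) ` {x \<in> S. x 0 = 0}"
      using image_eqI[of z "\<lambda>x. restrict x {1..<n}" x] by blast
  qed
qed

lemma vol_hyp_S: "vol_hyp n S = 2 ^ (n - 1)"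
proof -
  interpret product_sigma_finite "\<lambda>_::nat. lborel :: real measure" by standard
  have "emeasure (Pi\<^sub>M {1..<n} (\<lambda>_. lborel :: real measure)) (PiE {1..<n} (\<lambda>_. {-1..1})) =
        (\<Prod>i\<in>{1..<n}. emeasure lborel {-1..1::real})"
    by (rule emeasure_PiM) auto
  also have "\<dots> = ennreal 2 ^ (n - 1)" by simp
  also have "\<dots> = ennreal (2 ^ (n - 1))" by (subst ennreal_power) auto
  finally show ?thesis unfolding vol_hyp_def hyperplane_section by (simp add: measure_def)
qed

lemma g_le_G: "0 \<le> s \<Longrightarrow> s \<le> L \<Longrightarrow> g s \<le> G"
  using m_pos c_less_L by (auto simp: g_def G_def max_def intro!: mult_left_mono)

lemma edist_S_le:
  assumes x: "x \<in> S" and y: "y \<in> S"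
  shows "edist n x y \<le> 2 * sqrt (L\<^sup>2 + (n - 1) * G\<^sup>2)"
proof -
  have "\<bar>x 0 - y 0\<bar> \<le> \<bar>2 * L\<bar>" using x y by (auto simp: S_def)
  then have d0: "(x 0 - y 0)\<^sup>2 \<le> (2 * L)\<^sup>2" by (simp only: abs_le_square_iff)
  have di: "(x i - y i)\<^sup>2 \<le> (2 * G)\<^sup>2" if i: "i \<in> {1..<n}" for i
  proof -
    have "\<bar>x i\<bar> \<le> G" "\<bar>y i\<bar> \<le> G"
      using x y i g_le_G[of "\<bar>x 0\<bar>"] g_le_G[of "\<bar>y 0\<bar>"] by (force simp: S_def)+
    then have "\<bar>x i - y i\<bar> \<le> \<bar>2 * G\<bar>" by arith
    then show ?thesis by (simp only: abs_le_square_iff)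
  qed
  have "(\<Sum>i<n. (x i - y i)\<^sup>2) = (x 0 - y 0)\<^sup>2 + (\<Sum>i\<in>{1..<n}. (x i - y i)\<^sup>2)"
    using n_pos by (simp add: lessThan_atLeast0 sum.atLeast_Suc_lessThan)
  also have "\<dots> \<le> (2 * L)\<^sup>2 + (\<Sum>i\<in>{1..<n}. (2 * G)\<^sup>2)"
    using d0 di by (intro add_mono sum_mono) auto
  also have "\<dots> = 4 * (L\<^sup>2 + (n - 1) * G\<^sup>2)"
    using n_pos by (simp add: power_mult_distrib algebra_simps of_nat_diff)
  finally have "edist n x y \<le> sqrt 4 * sqrt (L\<^sup>2 + (n - 1) * G\<^sup>2)"
    unfolding edist_def real_sqrt_mult[symmetric] by (rule real_sqrt_le_mono)
  moreover have "sqrt 4 = (2::real)" by (simp add: real_sqrt_eq_iff)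
  ultimately show ?thesis by simp
qed

lemma Diam_S: "0 < Diam n S" "Diam n S \<le> 2 * sqrt (L\<^sup>2 + (n - 1) * G\<^sup>2)"
proof -
  let ?D = "{edist n x y | x y. x \<in> S \<and> y \<in> S}"
  define e where "e = restrict (\<lambda>i. if i = 0 then L else 0) {..<n}"
  have eS: "e \<in> S" unfolding S_def e_def Rn_def using L_pos n_pos g_pos[of L] by auto
  have bound: "\<And>d. d \<in> ?D \<Longrightarrow> d \<le> 2 * sqrt (L\<^sup>2 + (n - 1) * G\<^sup>2)" using edist_S_le by blast
  have "?D \<noteq> {}" using eS by blast
  then show "Diam n S \<le> 2 * sqrt (L\<^sup>2 + (n - 1) * G\<^sup>2)" unfolding Diam_def by (rule cSup_least[OF _ bound])
  have "(\<Sum>i<n. (restrict (\<lambda>_. 0) {..<n} i - e i)\<^sup>2) = (\<Sum>i<n. if i = 0 then L\<^sup>2 else 0)"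
    by (intro sum.cong) (auto simp: e_def)
  then have "edist n (restrict (\<lambda>_. 0) {..<n}) e = L" using L_pos n_pos by (simp add: edist_def)
  then have "L \<in> ?D" using zero_in_S eS by blast
  moreover have "bdd_above ?D" using bound by (rule bdd_aboveI)
  ultimately have "L \<le> Diam n S" unfolding Diam_def by (rule cSup_upper)
  then show "0 < Diam n S" using L_pos by simp
qed

lemma eta_S_ge: "c * q ^ (n - 1) / (c + P) \<le> eta n S"
proof -
  have "(2 * c * (2 * q) ^ (n - 1)) / (2 ^ (n - 1) * (2 * c + 2 * P)) =
        (2 ^ (n - 1) * 2) * (c * q ^ (n - 1)) / ((2 ^ (n - 1) * 2) * (c + P))"
    by (simp add: power_mult_distrib algebra_simps)
  also have "\<dots> = c * q ^ (n - 1) / (c + P)" by (rule mult_divide_mult_cancel_left) simp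
  finally have "c * q ^ (n - 1) / (c + P) = (2 * c * (2 * q) ^ (n - 1)) / (2 ^ (n - 1) * (2 * c + 2 * P))"
    by simp
  also have "\<dots> \<le> vol n (kernel n S) / (2 ^ (n - 1) * (2 * c + 2 * P))"
    using vol_kernel_ge c_pos P_pos by (intro divide_right_mono) auto
  also have "\<dots> \<le> vol n (kernel n S) / vol n S"
    using vol_S_pos vol_S_le by (intro divide_left_mono) (auto simp: vol_def)
  finally show ?thesis by (simp add: eta_def)
qed

lemma vol_hyp_S_le:
  assumes A: "2 * sqrt (L\<^sup>2 + (n - 1) * G\<^sup>2) \<le> A * P" and A0: "0 \<le> A"
  shows "vol_hyp n S \<le> A / Diam n S * min (vol n (S \<inter> {x. x 0 \<le> 0})) (vol n (S \<inter> {x. x 0 \<ge> 0}))"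
proof -
  define D where "D = Diam n S"
  define V :: real where "V = 2 ^ (n - 1)"
  have D0: "0 < D" and "D \<le> A * P" using Diam_S A by (auto simp: D_def)
  then have "1 \<le> A * P / D" by simp
  then have "V * 1 \<le> V * (A * P / D)" by (intro mult_left_mono) (simp_all add: V_def)
  then have "V \<le> V * (A * P / D)" by simp
  also have "\<dots> = A / D * (V * P)" by (simp add: field_simps)
  also have "\<dots> \<le> A / D * min (vol n (S \<inter> {x. x 0 \<le> 0})) (vol n (S \<inter> {x. x 0 \<ge> 0}))"
    using vol_lower_half_ge vol_upper_half_ge A0 D0 by (intro mult_left_mono) (auto simp: V_def)
  finally show ?thesis by (simp add: vol_hyp_S D_def V_def)
qed

end

subsection \<open>Choice of the parameters\<close>

lemma exp_le_one_plus_twice: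
  fixes x :: real
  assumes x: "0 \<le> x" "x \<le> 1/2"
  shows "exp x \<le> 1 + 2 * x"
proof -
  have "exp x \<le> 1 + x + x\<^sup>2" using x by (intro exp_bound) auto
  moreover have "x\<^sup>2 \<le> x" using x mult_left_le[of x x] by (simp add: power2_eq_square)
  ultimately show ?thesis by simp
qed

text \<open>For \<open>0 < \<eta> < 1\<close> and \<open>n \<ge> 2 ln (1/\<eta>)\<close> we take the prism with \<open>L = \<surd>n\<close>, \<open>c = \<epsilon> \<surd>n\<close>,
  \<open>\<epsilon> = min (1/2) (1 / (16 ln (1/\<eta>)))\<close>, and the slope \<open>m\<close> for which \<open>G = g L = exp (ln (1/\<eta>) / n)\<close>.
  Then \<open>G\<^sup>n = 1/\<eta>\<close>, so \<open>\<eta> P = (1 - \<eta>)/(m n)\<close>, and \<open>m n\<close> is comparable to \<open>ln (1/\<eta>) / \<surd>n\<close>.\<close>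
locale tuned_prism =
  fixes \<eta> :: real and n :: nat
  assumes \<eta>_pos: "0 < \<eta>" and \<eta>_less_1: "\<eta> < 1"
    and n_large: "2 * ln (1 / \<eta>) \<le> real n" and n2: "2 \<le> n"
begin

definition b :: real where "b = ln (1 / \<eta>)"
definition \<epsilon> :: real where "\<epsilon> = min (1/2) (1 / (16 * b))"
definition L :: real where "L = sqrt (real n)"
definition c :: real where "c = \<epsilon> * L"
definition m :: real where "m = (exp (b / real n) - 1) / (L - c)"

lemma real_n_pos: "0 < real n" using n2 by simp

lemma b_pos: "0 < b" unfolding b_def using \<eta>_pos \<eta>_less_1 by (simp add: ln_gt_zero)

lemma b_ge: "1 - \<eta> \<le> b"
  using ln_le_minus_one[OF \<eta>_pos] \<eta>_pos by (simp add: b_def ln_div)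

lemma \<epsilon>_pos: "0 < \<epsilon>" unfolding \<epsilon>_def using b_pos by simp

lemma \<epsilon>_le_half: "\<epsilon> \<le> 1/2" unfolding \<epsilon>_def by simp

lemma \<epsilon>_b: "\<epsilon> * b \<le> 1/16"
proof -
  have "\<epsilon> * b \<le> 1 / (16 * b) * b" using b_pos by (intro mult_right_mono) (auto simp: \<epsilon>_def)
  then show ?thesis using b_pos by simp
qed

text \<open>The exponent \<open>b / n\<close> is at most \<open>1/2\<close>, so \<open>exp (b/n) - 1\<close> is between \<open>b/n\<close> and \<open>2b/n\<close>.\<close>
lemma step_bounds: "b / n \<le> exp (b / n) - 1" "exp (b / n) - 1 \<le> 2 * (b / n)"
proof -
  have "0 \<le> b / n" "b / n \<le> 1/2" using b_pos real_n_pos n_large by (auto simp: b_def divide_le_eq)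
  then show "exp (b / n) - 1 \<le> 2 * (b / n)" using exp_le_one_plus_twice[of "b / n"] by simp
  show "b / n \<le> exp (b / n) - 1" using exp_ge_add_one_self[of "b / n"] by linarith
qed

lemma L_pos: "0 < L" unfolding L_def using real_n_pos by simp

lemma L_minus_c: "L - c = L * (1 - \<epsilon>)" by (simp add: c_def algebra_simps)

lemma c_pos: "0 < c" unfolding c_def using \<epsilon>_pos L_pos by simp

lemma c_less_L: "c < L"
proof -
  have "0 < L * (1 - \<epsilon>)" using L_pos \<epsilon>_le_half by simp
  then show ?thesis using L_minus_c by linarith
qed

lemma m_pos: "0 < m"
  unfolding m_def using step_bounds(1) b_pos real_n_pos c_less_L by (simp add: divide_pos_pos)

lemma mn_bounds: "b / L \<le> m * n" "m * n \<le> 4 * b / L"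
proof -
  have mn: "m * n = n * (exp (b / n) - 1) / (L * (1 - \<epsilon>))" unfolding m_def L_minus_c by simp
  have lo: "b \<le> n * (exp (b / n) - 1)" and hi: "n * (exp (b / n) - 1) \<le> 2 * b"
    using mult_left_mono[OF step_bounds(1), of n] mult_left_mono[OF step_bounds(2), of n] real_n_pos by auto
  have "b / L \<le> b / (L * (1 - \<epsilon>))"
    using b_pos L_pos \<epsilon>_pos \<epsilon>_le_half by (intro divide_left_mono) (auto simp: mult_le_cancel_left1)
  also have "\<dots> \<le> m * n" unfolding mn using lo L_pos \<epsilon>_le_half by (intro divide_right_mono) auto
  finally show "b / L \<le> m * n" .
  have "m * n \<le> 2 * b / (L * (1 - \<epsilon>))" unfolding mn using hi L_pos \<epsilon>_le_half by (intro divide_right_mono) auto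
  also have "\<dots> \<le> 2 * b / (L * (1/2))" using b_pos L_pos \<epsilon>_le_half by (intro divide_left_mono) auto
  finally show "m * n \<le> 4 * b / L" by simp
qed

text \<open>The product \<open>m c\<close> is so small that even \<open>(1 - 2mc)\<^sup>n\<^sup>-\<^sup>1 \<ge> 1/2\<close>.\<close>
lemma n_m_c: "n * (m * c) \<le> 1/4"
proof -
  have "n * (m * c) = \<epsilon> * (m * n * L)" by (simp add: c_def)
  also have "\<dots> \<le> \<epsilon> * (4 * b)" using mn_bounds(2) L_pos \<epsilon>_pos by (intro mult_left_mono) (auto simp: field_simps)
  also have "\<dots> \<le> 1/4" using \<epsilon>_b by simp
  finally show ?thesis .
qed

lemma m_c: "m * c \<le> 1/4"
proof -
  have "1 * (m * c) \<le> real n * (m * c)" using n2 m_pos c_pos by (intro mult_right_mono) auto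
  then show ?thesis using n_m_c by simp
qed

sublocale flared_prism n L m c
  using n2 c_pos c_less_L m_pos m_c by unfold_locales auto

lemma G_eq: "G = exp (b / n)" unfolding G_def using c_less_L by (simp add: m_def)

lemma eta_P: "\<eta> * P = (1 - \<eta>) / (m * n)"
proof -
  have "G ^ n = exp (n * (b / n))" by (simp only: G_eq exp_of_nat_mult)
  also have "\<dots> = 1 / \<eta>" using real_n_pos \<eta>_pos by (simp add: b_def)
  finally show ?thesis using \<eta>_pos by (simp add: P_def field_simps)
qed

lemma q_power_ge: "1/2 \<le> q ^ (n - 1)"
proof -
  have "1 + real (n - 1) * (- (2 * m * c)) \<le> (1 + (- (2 * m * c))) ^ (n - 1)"
    using m_c by (intro Bernoulli_inequality) auto
  moreover have "real (n - 1) * (2 * (m * c)) \<le> real n * (2 * (m * c))"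
    using m_pos c_pos by (intro mult_right_mono) auto
  ultimately show ?thesis using n_m_c by (simp add: q_def algebra_simps)
qed

lemma c_fraction: "\<eta> / 16 \<le> c / (c + P)"
proof -
  have "\<eta> * P \<le> (1 - \<eta>) / (b / L)"
    unfolding eta_P using \<eta>_less_1 mn_bounds(1) b_pos L_pos m_pos real_n_pos by (intro divide_left_mono) auto
  then have "\<eta> * (c + P) \<le> L * (\<eta> * \<epsilon> + (1 - \<eta>) / b)"
    using L_pos by (simp add: c_def field_simps)
  also have "\<eta> * \<epsilon> + (1 - \<eta>) / b \<le> 16 * \<epsilon>"
  proof (cases "1/2 \<le> 1 / (16 * b)")
    case True
    then have \<epsilon>: "\<epsilon> = 1/2" unfolding \<epsilon>_def by simp
    have "(1 - \<eta>) / b \<le> 1" using b_ge b_pos by simp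
    then show ?thesis unfolding \<epsilon> using \<eta>_less_1 by simp
  next
    case False
    then have "\<epsilon> = 1 / (16 * b)" unfolding \<epsilon>_def by simp
    then show ?thesis using \<eta>_pos b_pos by (simp add: field_simps)
  qed
  then have "L * (\<eta> * \<epsilon> + (1 - \<eta>) / b) \<le> 16 * c" using L_pos by (simp add: c_def)
  finally have "\<eta> * (c + P) \<le> 16 * c" .
  moreover have "\<eta> / 16 * (c + P) = \<eta> * (c + P) / 16" by simp
  ultimately have "\<eta> / 16 * (c + P) \<le> c" by linarith
  then show ?thesis using c_pos P_pos by (simp add: pos_le_divide_eq)
qed

lemma eta_S_bound: "1/64 * \<eta> \<le> eta n S"
proof -
  have "1/64 * \<eta> \<le> 1/2 * (\<eta> / 16)" using \<eta>_pos by simp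
  also have "\<dots> \<le> q ^ (n - 1) * (c / (c + P))"
    using q_power_ge c_fraction \<eta>_pos by (intro mult_mono) auto
  also have "\<dots> = c * q ^ (n - 1) / (c + P)" by simp
  also have "\<dots> \<le> eta n S" by (rule eta_S_ge)
  finally show ?thesis .
qed

text \<open>Since \<open>G \<le> 2\<close>, the diameter is at most \<open>5 \<surd>n\<close>, whereas \<open>A P \<ge> 5 \<surd>n\<close> for the constant
  \<open>A = 20 \<eta> b / (1 - \<eta>)\<close> of the theorem.\<close>
lemma diameter_bound: "2 * sqrt (L\<^sup>2 + (n - 1) * G\<^sup>2) \<le> 5 * L"
proof -
  have "2 * (b / n) \<le> 1" using n_large real_n_pos by (simp add: b_def field_simps)
  then have "G \<le> 2" using step_bounds(2) unfolding G_eq by linarith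
  then have "G\<^sup>2 \<le> 2\<^sup>2" using G_gt_1 by (intro power_mono) auto
  then have "real (n - 1) * G\<^sup>2 \<le> real n * 4" by (intro mult_mono) auto
  then have "sqrt (4 * (L\<^sup>2 + (n - 1) * G\<^sup>2)) \<le> sqrt ((5 * L)\<^sup>2)"
    using real_n_pos by (intro real_sqrt_le_mono) (simp add: L_def power_mult_distrib)
  moreover have "sqrt (4 * (L\<^sup>2 + (n - 1) * G\<^sup>2)) = 2 * sqrt (L\<^sup>2 + (n - 1) * G\<^sup>2)"
    by (simp only: real_sqrt_mult) (simp add: real_sqrt_eq_iff)
  moreover have "sqrt ((5 * L)\<^sup>2) = 5 * L" using L_pos by (subst real_sqrt_abs) simp
  ultimately show ?thesis by linarith
qed

lemma vol_hyp_bound: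
  "vol_hyp n S \<le> 20 * ((\<eta> * ln (1 / \<eta>)) / ((1 - \<eta>) * Diam n S)) *
     min (vol n (S \<inter> {x. x 0 \<le> 0})) (vol n (S \<inter> {x. x 0 \<ge> 0}))"
proof -
  define A where "A = 20 * (\<eta> * b / (1 - \<eta>))"
  have "A * P = 20 * b / (1 - \<eta>) * (\<eta> * P)" using \<eta>_less_1 by (simp add: A_def field_simps)
  also have "\<dots> = 20 * b / (m * n)" using \<eta>_less_1 by (simp add: eta_P)
  also have "5 * L \<le> 20 * b / (m * n)"
  proof -
    have "20 * b / (4 * b / L) \<le> 20 * b / (m * n)"
      using mn_bounds(2) m_pos real_n_pos b_pos L_pos by (intro divide_left_mono) auto
    then show ?thesis using b_pos L_pos by (simp add: field_simps)
  qed
  ultimately have "2 * sqrt (L\<^sup>2 + (n - 1) * G\<^sup>2) \<le> A * P" using diameter_bound by linarith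
  moreover have "0 \<le> A" using \<eta>_pos \<eta>_less_1 b_pos by (simp add: A_def)
  ultimately have "vol_hyp n S \<le> A / Diam n S * min (vol n (S \<inter> {x. x 0 \<le> 0})) (vol n (S \<inter> {x. x 0 \<ge> 0}))"
    by (rule vol_hyp_S_le)
  then show ?thesis by (simp add: A_def b_def field_simps)
qed

end

lemma tuned_prism_sequence:
  assumes \<eta>: "0 < \<eta>" "\<eta> < 1"
  shows "\<exists>(S :: nat \<Rightarrow> (nat \<Rightarrow> real) set) (N :: nat). \<forall>n \<ge> N.
           star_body n (S n) \<and> centrally_symmetric n (S n) \<and> 1/64 * \<eta> \<le> eta n (S n) \<and>
           vol_hyp n (S n) \<le> 20 * ((\<eta> * ln (1 / \<eta>)) / ((1 - \<eta>) * Diam n (S n))) *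
             min (vol n (S n \<inter> {x. x 0 \<le> 0})) (vol n (S n \<inter> {x. x 0 \<ge> 0}))"
proof (intro exI allI impI)
  fix n assume "nat \<lceil>2 * ln (1 / \<eta>)\<rceil> + 2 \<le> n"
  then interpret tuned_prism \<eta> n using \<eta> by unfold_locales linarith+
  show "star_body n S \<and> centrally_symmetric n S \<and> 1/64 * \<eta> \<le> eta n S \<and>
      vol_hyp n S \<le> 20 * ((\<eta> * ln (1 / \<eta>)) / ((1 - \<eta>) * Diam n S)) *
        min (vol n (S \<inter> {x. x 0 \<le> 0})) (vol n (S \<inter> {x. x 0 \<ge> 0}))"
    using S_star_body S_centrally_symmetric eta_S_bound vol_hyp_bound by blast
qed

theorem theorem3p1:
  shows "\<exists>C c :: real. C > 0 \<and> c > 0 \<and>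
    (\<forall>\<eta>::real. 0 < \<eta> \<and> \<eta> < 1 \<longrightarrow>
      (\<exists>(S :: nat \<Rightarrow> (nat \<Rightarrow> real) set) (N :: nat). \<forall>n \<ge> N.
         star_body n (S n) \<and> centrally_symmetric n (S n) \<and>
         eta n (S n) \<ge> c * \<eta> \<and>
         vol_hyp n (S n) \<le> C * ((\<eta> * ln (1 / \<eta>)) / ((1 - \<eta>) * Diam n (S n))) *
            min (vol n (S n \<inter> {x. x 0 \<le> 0})) (vol n (S n \<inter> {x. x 0 \<ge> 0}))))"
  using tuned_prism_sequence by (intro exI[of _ 20] exI[of _ "1/64"]) auto

end
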